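(* Let $N=\{1,\ldots,n\}$. The following hold for the polytope $\mathscr{BG}_+(n)$: (1) each equality $v(S)=0$, $S\neq\varnothing,N$, defines a facet of $\mathscr{BG}_+(n)$; (2) each equality $\sum_{S\in\mathscr{B}}\lambda^{\mathscr{B}}_Sv(S)=1$, $\mathscr{B}\in\mathfrak{B}^*(n)$, defines a facet of $\mathscr{BG}_+(n)$; (3) the number of facets of $\mathscr{BG}_+(n)$ is $2^n+b(n)-3$, where $b(n)$ is the number of minimal balanced collections on $N$.
   Context: A game on $N$ is a map $v:2^N\to\mathbb{R}$ with $v(\varnothing)=0$. A collection $\mathscr{B}$ of nonempty subsets of $N$ is balanced if there exist positive weights $(\lambda_S)_{S\in\mathscr{B}}$ with $\sum_{S\in\mathscr{B},S\ni i}\lambda_S=1$ for all $i\in N$; minimal balanced if no proper subcollection is balanced, with unique weights $\lambda^{\mathscr{B}}_S$. $b(n)$ counts all minimal balanced collections on $N$ (including $\{N\}$), and $\mathfrak{B}^*(n)$ is the set of minimal balanced collections other than $\{N\}$. $\mathscr{BG}_+(n)=\{v: v(S)\geqslant0\ \forall\varnothing\neq S\subsetneq N,\ v(N)=1,\ \sum_{S\in\mathscr{B}}\lambda^{\mathscr{B}}_Sv(S)\leqslant1\ \forall\mathscr{B}\in\mathfrak{B}^*(n)\}$, viewed in $\mathbb{R}^{2^N\setminus\{\varnothing,N\}}$. *)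

theory Defs
  imports "HOL-Analysis.Analysis"
begin

text \<open>Players form a finite type 'n; the grand coalition N is UNIV, n = CARD('n).
  A game is a vector indexed by all coalitions (real ^ 'n set).\<close>

definition balanced :: "('n::finite) set set \<Rightarrow> bool" where
  "balanced B \<longleftrightarrow> (\<forall>S\<in>B. S \<noteq> {}) \<and>
     (\<exists>w::'n set \<Rightarrow> real. (\<forall>S\<in>B. w S > 0) \<and>
        (\<forall>i::'n. (\<Sum>S\<in>{S\<in>B. i \<in> S}. w S) = 1))"

definition minimal_balanced :: "('n::finite) set set \<Rightarrow> bool" where
  "minimal_balanced B \<longleftrightarrow> balanced B \<and> (\<forall>B'. B' \<subset> B \<longrightarrow> \<not> balanced B')"

text \<open>The (unique, for minimal balanced collections) balancing weights, set to 0 outside B.\<close>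
definition bal_weight :: "('n::finite) set set \<Rightarrow> 'n set \<Rightarrow> real" where
  "bal_weight B = (THE w. (\<forall>S\<in>B. w S > 0) \<and> (\<forall>S. S \<notin> B \<longrightarrow> w S = 0) \<and>
        (\<forall>i::'n. (\<Sum>S\<in>{S\<in>B. i \<in> S}. w S) = 1))"

text \<open>b(n): number of all minimal balanced collections on N (including {N}).\<close>
definition num_min_bal :: "('n::finite) itself \<Rightarrow> nat" where
  "num_min_bal _ = card {B :: 'n set set. minimal_balanced B}"

text \<open>BG_+(n), embedded in R^(2^N) via v({}) = 0 and v(N) = 1.\<close>
definition BG_plus :: "(real ^ ('n::finite set)) set" where
  "BG_plus = {v. v $ {} = 0 \<and> v $ UNIV = 1 \<and>
      (\<forall>S. S \<noteq> {} \<and> S \<noteq> UNIV \<longrightarrow> v $ S \<ge> 0) \<and>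
      (\<forall>B. minimal_balanced B \<and> B \<noteq> {UNIV} \<longrightarrow>
              (\<Sum>S\<in>B. bal_weight B S * v $ S) \<le> 1)}"

end

theory Submission
  imports Defs
begin

text \<open>
  BG_+(n) is cut out of the affine space of games with v({}) = 0 and v(N) = 1 by the
  2^n - 2 inequalities v(S) \<ge> 0 and the b(n) - 1 balancedness inequalities.
  A finite system of inequalities on an affine space that has a strictly feasible point,
  and for each inequality a point of its hyperplane satisfying all other inequalities strictly,
  is irredundant: its facets are exactly the hyperplane sections, and they are pairwise
  distinct. For BG_+(n) take the strictly feasible game |S|/2n. Setting its value on S to 0
  gives the point for v(S) \<ge> 0. For a minimal balanced collection B take
  (2|S| - [S \<notin> B])/2n: since the balancing weights of every minimal balanced B' satisfy
  \<Sum> \<lambda>_S |S| = n, its B'-constraint has value 1 - \<Sum>{\<lambda>_S | S \<in> B' - B}/2n,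
  which is < 1 because no other minimal balanced collection is contained in B.
\<close>

section \<open>Irredundant systems of linear inequalities\<close>

lemma facets_of_irredundant_halfspaces:
  fixes a :: "'i \<Rightarrow> 'a::euclidean_space" and b :: "'i \<Rightarrow> real"
  assumes "finite I"
    and S: "S = affine hull S \<inter> {x. \<forall>i\<in>I. a i \<bullet> x \<le> b i}"
    and nonzero: "\<And>i. i \<in> I \<Longrightarrow> a i \<noteq> 0"
    and violator: "\<And>i. i \<in> I \<Longrightarrow>
          \<exists>x\<in>affine hull S. a i \<bullet> x > b i \<and> (\<forall>j\<in>I - {i}. a j \<bullet> x \<le> b j)"
  shows "{F. F facet_of S} = (\<lambda>i. S \<inter> {x. a i \<bullet> x = b i}) ` I"
proof -
  \<comment> \<open>facet_of_polyhedron_explicit indexes the inequalities by their halfspaces;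
    the violators make the halfspaces of distinct indices distinct.\<close>
  define H where "H i = {x. a i \<bullet> x \<le> b i}" for i
  have inj: "inj_on H I"
  proof (rule inj_onI, rule ccontr)
    fix i j assume "i \<in> I" "j \<in> I" "H i = H j" "i \<noteq> j"
    then obtain x where "a i \<bullet> x > b i" "a j \<bullet> x \<le> b j" using violator[of i] by blast
    with \<open>H i = H j\<close> show False unfolding H_def by (metis (mono_tags) mem_Collect_eq not_le)
  qed
  define i_of where "i_of = inv_into I H"
  have i_of: "i_of (H i) = i" if "i \<in> I" for i
    unfolding i_of_def using inv_into_f_f[OF inj that] .
  have "C facet_of S \<longleftrightarrow>
      (\<exists>h. h \<in> H ` I \<and> C = S \<inter> {x. a (i_of h) \<bullet> x = b (i_of h)})" for C
  proof (rule facet_of_polyhedron_explicit)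
    show "finite (H ` I)" using \<open>finite I\<close> by simp
    show "S = affine hull S \<inter> \<Inter> (H ` I)" using S unfolding H_def by blast
    show "a (i_of h) \<noteq> 0 \<and> h = {x. a (i_of h) \<bullet> x \<le> b (i_of h)}" if "h \<in> H ` I" for h
      using that nonzero i_of unfolding H_def by auto
    show "S \<subset> affine hull S \<inter> \<Inter> F'" if "F' \<subset> H ` I" for F'
    proof -
      obtain i where i: "i \<in> I" "H i \<notin> F'" using \<open>F' \<subset> H ` I\<close> by blast
      then obtain x where x: "x \<in> affine hull S" "a i \<bullet> x > b i" "\<forall>j\<in>I - {i}. a j \<bullet> x \<le> b j"
        using violator by blast
      have "x \<in> \<Inter> F'" using that i x unfolding H_def by fastforce
      moreover have "x \<notin> S" using x(2) i(1) by (subst S) (auto simp: not_le)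
      moreover have "S \<subseteq> affine hull S \<inter> \<Inter> F'"
        using that S hull_subset[of S affine] unfolding H_def by blast
      ultimately show ?thesis using x by blast
    qed
  qed
  then show ?thesis using i_of by (auto simp: image_iff)
qed

lemma affine_hull_affine_Int_strict_halfspaces:
  fixes a :: "'i \<Rightarrow> 'a::euclidean_space"
  assumes "finite I" "affine A" "y \<in> A" "\<And>i. i \<in> I \<Longrightarrow> a i \<bullet> y < b i"
  shows "affine hull (A \<inter> {x. \<forall>i\<in>I. a i \<bullet> x \<le> b i}) = A"
proof -
  define T where "T = (\<Inter>i\<in>I. {x. a i \<bullet> x < b i})"
  have "open {x. a i \<bullet> x < b i}" for i by (rule open_halfspace_lt)
  then have "open T" unfolding T_def using \<open>finite I\<close> by blast
  moreover have "y \<in> A \<inter> T" using assms(3,4) unfolding T_def by blast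
  ultimately have "affine hull (A \<inter> T) = affine hull A"
    by (intro affine_hull_affine_Int_open[OF \<open>affine A\<close>]) auto
  also have "\<dots> = A" using \<open>affine A\<close> by (simp add: affine_hull_eq)
  finally have hull_T: "affine hull (A \<inter> T) = A" .
  have "A \<inter> T \<subseteq> A \<inter> {x. \<forall>i\<in>I. a i \<bullet> x \<le> b i}" unfolding T_def by (auto intro: less_imp_le)
  from hull_mono[OF this, of affine]
  have "A \<subseteq> affine hull (A \<inter> {x. \<forall>i\<in>I. a i \<bullet> x \<le> b i})" unfolding hull_T .
  moreover have "affine hull (A \<inter> {x. \<forall>i\<in>I. a i \<bullet> x \<le> b i}) \<subseteq> A"
    using \<open>affine A\<close> by (intro hull_minimal) auto
  ultimately show ?thesis by blast
qed

lemma push_off_facet: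
  fixes a :: "'i \<Rightarrow> 'a::euclidean_space"
  assumes "finite J" "affine A" "y \<in> A" "p \<in> A"
    and "a i \<bullet> y < b i" "a i \<bullet> p = b i" "\<forall>j\<in>J. a j \<bullet> p < b j"
  shows "\<exists>x\<in>A. a i \<bullet> x > b i \<and> (\<forall>j\<in>J. a j \<bullet> x \<le> b j)"
proof -
  define x where "x t = p + t *\<^sub>R (p - y)" for t :: real
  have inner_x: "a k \<bullet> x t = a k \<bullet> p + t * (a k \<bullet> (p - y))" for k t
    unfolding x_def by (simp add: inner_add_right)
  have "\<forall>\<^sub>F t in at_right 0. a j \<bullet> x t < b j" if "j \<in> J" for j
  proof -
    have "((\<lambda>t. a j \<bullet> p + t * (a j \<bullet> (p - y))) \<longlongrightarrow> a j \<bullet> p + 0 * (a j \<bullet> (p - y))) (at_right 0)"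
      by (intro tendsto_intros)
    then have "((\<lambda>t. a j \<bullet> x t) \<longlongrightarrow> a j \<bullet> p) (at_right 0)" by (simp add: inner_x)
    then show ?thesis using that assms(7) by (intro order_tendstoD) auto
  qed
  then have "\<forall>\<^sub>F t in at_right 0. \<forall>j\<in>J. a j \<bullet> x t < b j"
    using \<open>finite J\<close> by (simp add: eventually_ball_finite)
  then have "\<forall>\<^sub>F t in at_right 0. 0 < t \<and> (\<forall>j\<in>J. a j \<bullet> x t < b j)"
    by (rule eventually_conj[OF eventually_at_right_less])
  then obtain t where t: "0 < t" "\<forall>j\<in>J. a j \<bullet> x t < b j"
    using eventually_happens[of _ "at_right (0::real)"] by auto
  have "x t = (1 + t) *\<^sub>R p + (- t) *\<^sub>R y" unfolding x_def by (simp add: algebra_simps)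
  then have "x t \<in> A" using mem_affine[OF \<open>affine A\<close> \<open>p \<in> A\<close> \<open>y \<in> A\<close>, of "1 + t" "- t"] by simp
  moreover have "a i \<bullet> x t > b i"
    using t(1) assms(5,6) by (simp add: inner_x inner_diff_right)
  ultimately show ?thesis using t(2) by (auto intro: less_imp_le)
qed

lemma facets_of_irredundant_inequalities:
  fixes a :: "'i \<Rightarrow> 'a::euclidean_space" and b :: "'i \<Rightarrow> real"
  assumes "finite I" "affine A"
    and S: "S = A \<inter> {x. \<forall>i\<in>I. a i \<bullet> x \<le> b i}"
    and y: "y \<in> A" "\<And>i. i \<in> I \<Longrightarrow> a i \<bullet> y < b i"
    and p: "\<And>i. i \<in> I \<Longrightarrow> p i \<in> A \<and> a i \<bullet> p i = b i \<and> (\<forall>j\<in>I - {i}. a j \<bullet> p i < b j)"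
  shows "{F. F facet_of S} = (\<lambda>i. S \<inter> {x. a i \<bullet> x = b i}) ` I"
    and "inj_on (\<lambda>i. S \<inter> {x. a i \<bullet> x = b i}) I"
proof -
  have hull: "affine hull S = A"
    unfolding S by (rule affine_hull_affine_Int_strict_halfspaces[OF assms(1,2) y])
  show "{F. F facet_of S} = (\<lambda>i. S \<inter> {x. a i \<bullet> x = b i}) ` I"
  proof (rule facets_of_irredundant_halfspaces)
    show "S = affine hull S \<inter> {x. \<forall>i\<in>I. a i \<bullet> x \<le> b i}" using S hull by simp
    show "a i \<noteq> 0" if "i \<in> I" for i using y(2)[OF that] p[OF that] by auto
    show "\<exists>x\<in>affine hull S. a i \<bullet> x > b i \<and> (\<forall>j\<in>I - {i}. a j \<bullet> x \<le> b j)" if "i \<in> I" for i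
      unfolding hull using p[OF that] y(2)[OF that] assms(1,2) y(1)
      by (intro push_off_facet[of "I - {i}" A y "p i" a i b]) auto
  qed fact
  have "p i \<in> S \<inter> {x. a i \<bullet> x = b i}" "p i \<notin> S \<inter> {x. a j \<bullet> x = b j}"
    if "i \<in> I" "j \<in> I" "i \<noteq> j" for i j
  proof -
    have "a k \<bullet> p i \<le> b k" if "k \<in> I" for k
      using p[OF \<open>i \<in> I\<close>] that by (cases "k = i") (auto intro: less_imp_le)
    then show "p i \<in> S \<inter> {x. a i \<bullet> x = b i}" using p[OF that(1)] unfolding S by blast
    have "a j \<bullet> p i < b j" using p[OF that(1)] that(2,3) by blast
    then show "p i \<notin> S \<inter> {x. a j \<bullet> x = b j}" by simp
  qed
  then show "inj_on (\<lambda>i. S \<inter> {x. a i \<bullet> x = b i}) I" by (intro inj_onI) blast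
qed

section \<open>Balancing weights of minimal balanced collections\<close>

lemma balanced_positive_support:
  fixes B :: "('n::finite) set set" and w :: "'n set \<Rightarrow> real"
  assumes "\<forall>S\<in>B. S \<noteq> {}" "\<forall>S\<in>B. w S \<ge> 0" "\<forall>i. (\<Sum>S\<in>{S\<in>B. i \<in> S}. w S) = 1"
  shows "balanced {S\<in>B. w S > 0}"
  unfolding balanced_def
proof (intro conjI exI[of _ w] allI)
  fix i
  have "w S = 0" if "S \<in> B" "\<not> w S > 0" for S
    using assms(2) that by force
  then have "(\<Sum>S\<in>{S\<in>{S\<in>B. w S > 0}. i \<in> S}. w S) = (\<Sum>S\<in>{S\<in>B. i \<in> S}. w S)"
    by (intro sum.mono_neutral_left) auto
  then show "(\<Sum>S\<in>{S\<in>{S\<in>B. w S > 0}. i \<in> S}. w S) = 1" using assms(3) by simp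
qed (use assms(1) in auto)

lemma balancing_weights_le_imp_eq:
  fixes B :: "('n::finite) set set" and w1 w2 :: "'n set \<Rightarrow> real"
  assumes nonempty: "\<forall>S\<in>B. S \<noteq> {}"
    and sum: "\<forall>i. (\<Sum>S\<in>{S\<in>B. i \<in> S}. w1 S) = 1" "\<forall>i. (\<Sum>S\<in>{S\<in>B. i \<in> S}. w2 S) = 1"
    and le: "\<forall>S\<in>B. w1 S \<le> w2 S"
  shows "\<forall>S\<in>B. w1 S = w2 S"
proof (rule ccontr)
  assume "\<not> (\<forall>S\<in>B. w1 S = w2 S)"
  then obtain S where "S \<in> B" "w1 S < w2 S" using le by force
  obtain i where "i \<in> S" using nonempty \<open>S \<in> B\<close> by blast
  have "(\<Sum>S\<in>{S\<in>B. i \<in> S}. w1 S) < (\<Sum>S\<in>{S\<in>B. i \<in> S}. w2 S)"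
    using le \<open>w1 S < w2 S\<close> \<open>i \<in> S\<close> \<open>S \<in> B\<close> by (intro sum_strict_mono_ex1) auto
  then show False using sum by simp
qed

lemma minimal_balanced_balanced: "minimal_balanced B \<Longrightarrow> balanced B"
  by (simp add: minimal_balanced_def)

lemma minimal_balanced_weights_unique:
  fixes B :: "('n::finite) set set" and w1 w2 :: "'n set \<Rightarrow> real"
  assumes mb: "minimal_balanced B"
    and w1: "\<forall>S\<in>B. w1 S > 0" "\<forall>i. (\<Sum>S\<in>{S\<in>B. i \<in> S}. w1 S) = 1"
    and w2: "\<forall>S\<in>B. w2 S > 0" "\<forall>i. (\<Sum>S\<in>{S\<in>B. i \<in> S}. w2 S) = 1"
    and "S \<in> B"
  shows "w1 S = w2 S"
proof (rule ccontr)
  assume "w1 S \<noteq> w2 S"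
  have nonempty: "\<forall>S\<in>B. S \<noteq> {}"
    using minimal_balanced_balanced[OF mb] unfolding balanced_def by blast
  define D where "D = {S\<in>B. w2 S < w1 S}"
  have "D \<noteq> {}"
  proof
    assume "D = {}"
    then have "\<forall>S\<in>B. w1 S \<le> w2 S" unfolding D_def by (metis (mono_tags) empty_Collect_eq not_less)
    then have "w1 S = w2 S"
      using balancing_weights_le_imp_eq[OF nonempty w1(2) w2(2)] \<open>S \<in> B\<close> by blast
    with \<open>w1 S \<noteq> w2 S\<close> show False ..
  qed
  \<comment> \<open>Move from w1 towards w2 until the first weight vanishes.\<close>
  define ratio where "ratio S = w1 S / (w1 S - w2 S)" for S
  define t where "t = Min (ratio ` D)"
  have "t \<in> ratio ` D" unfolding t_def using \<open>D \<noteq> {}\<close> by (intro Min_in) (auto simp: D_def)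
  then obtain T where T: "T \<in> D" "t = ratio T" by blast
  have t_le: "t \<le> ratio S" if "S \<in> D" for S
    unfolding t_def using that D_def by simp
  have "T \<in> B" "w2 T < w1 T" using T(1) unfolding D_def by auto
  then have "t > 0" using w1(1) T(2) unfolding ratio_def by simp
  define w where "w S = w1 S + t * (w2 S - w1 S)" for S
  have "w S \<ge> 0" if "S \<in> B" for S
  proof (cases "w2 S < w1 S")
    case True
    then have "t * (w1 S - w2 S) \<le> w1 S"
      using t_le[of S] that unfolding D_def ratio_def by (simp add: pos_le_divide_eq)
    then show ?thesis unfolding w_def by (simp add: algebra_simps)
  next
    case False
    then show ?thesis unfolding w_def using \<open>t > 0\<close> w1(1) that
      by (simp add: add_nonneg_nonneg less_imp_le)
  qed
  moreover have "(\<Sum>S\<in>{S\<in>B. i \<in> S}. w S) = 1" for i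
  proof -
    have "(\<Sum>S\<in>{S\<in>B. i \<in> S}. w S) = (\<Sum>S\<in>{S\<in>B. i \<in> S}. w1 S)
        + t * ((\<Sum>S\<in>{S\<in>B. i \<in> S}. w2 S) - (\<Sum>S\<in>{S\<in>B. i \<in> S}. w1 S))"
      unfolding w_def by (simp add: sum.distrib sum_distrib_left[symmetric] sum_subtractf)
    then show ?thesis using w1(2) w2(2) by simp
  qed
  ultimately have "balanced {S\<in>B. w S > 0}"
    using nonempty by (intro balanced_positive_support) auto
  moreover have "w T = 0" using T(2) \<open>w2 T < w1 T\<close> unfolding w_def ratio_def by (simp add: field_simps)
  then have "{S\<in>B. w S > 0} \<subset> B" using \<open>T \<in> B\<close> by (metis (mono_tags) less_irrefl mem_Collect_eq psubsetI subsetI)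
  ultimately show False using mb unfolding minimal_balanced_def by blast
qed

lemma bal_weight_eqI:
  fixes B :: "('n::finite) set set" and w :: "'n set \<Rightarrow> real"
  assumes mb: "minimal_balanced B"
    and w: "\<forall>S\<in>B. w S > 0" "\<forall>S. S \<notin> B \<longrightarrow> w S = 0" "\<forall>i. (\<Sum>S\<in>{S\<in>B. i \<in> S}. w S) = 1"
  shows "bal_weight B = w"
  unfolding bal_weight_def
proof (rule the_equality)
  show "(\<forall>S\<in>B. w S > 0) \<and> (\<forall>S. S \<notin> B \<longrightarrow> w S = 0) \<and> (\<forall>i. (\<Sum>S\<in>{S\<in>B. i \<in> S}. w S) = 1)"
    using w by blast
  fix w' :: "'n set \<Rightarrow> real"
  assume "(\<forall>S\<in>B. w' S > 0) \<and> (\<forall>S. S \<notin> B \<longrightarrow> w' S = 0) \<and>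
    (\<forall>i. (\<Sum>S\<in>{S\<in>B. i \<in> S}. w' S) = 1)"
  then have w': "\<forall>S\<in>B. w' S > 0" "\<forall>S. S \<notin> B \<longrightarrow> w' S = 0"
    "\<forall>i. (\<Sum>S\<in>{S\<in>B. i \<in> S}. w' S) = 1"
    by blast+
  show "w' = w"
  proof
    fix S
    show "w' S = w S"
    proof (cases "S \<in> B")
      case True
      then show ?thesis using minimal_balanced_weights_unique[OF mb w'(1,3) w(1,3)] by blast
    next
      case False
      then show ?thesis using w(2) w'(2) by simp
    qed
  qed
qed

lemma bal_weight_balancing:
  fixes B :: "('n::finite) set set"
  assumes mb: "minimal_balanced B"
  shows "(\<forall>S\<in>B. bal_weight B S > 0) \<and> (\<forall>S. S \<notin> B \<longrightarrow> bal_weight B S = 0) \<and>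
        (\<forall>i. (\<Sum>S\<in>{S\<in>B. i \<in> S}. bal_weight B S) = 1)"
proof -
  obtain w :: "'n set \<Rightarrow> real" where w: "\<forall>S\<in>B. w S > 0" "\<forall>i. (\<Sum>S\<in>{S\<in>B. i \<in> S}. w S) = 1"
    using minimal_balanced_balanced[OF mb] unfolding balanced_def by blast
  define w' where "w' S = (if S \<in> B then w S else 0)" for S
  have pos: "\<forall>S\<in>B. w' S > 0" and zero: "\<forall>S. S \<notin> B \<longrightarrow> w' S = 0"
    using w(1) by (simp_all add: w'_def)
  have "(\<Sum>S\<in>{S\<in>B. i \<in> S}. w' S) = (\<Sum>S\<in>{S\<in>B. i \<in> S}. w S)" for i
    by (rule sum.cong) (simp_all add: w'_def)
  then have sum: "\<forall>i. (\<Sum>S\<in>{S\<in>B. i \<in> S}. w' S) = 1" using w(2) by simp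
  show ?thesis using bal_weight_eqI[OF mb pos zero sum] pos zero sum by simp
qed

lemma bal_weight_pos: "minimal_balanced B \<Longrightarrow> S \<in> B \<Longrightarrow> bal_weight B S > 0"
  using bal_weight_balancing by blast

lemma bal_weight_eq_0: "minimal_balanced B \<Longrightarrow> S \<notin> B \<Longrightarrow> bal_weight B S = 0"
  using bal_weight_balancing by blast

lemma bal_weight_sum: "minimal_balanced B \<Longrightarrow> (\<Sum>S\<in>{S\<in>B. i \<in> S}. bal_weight B S) = 1"
  using bal_weight_balancing by blast

lemma bal_weight_nonneg: "minimal_balanced B \<Longrightarrow> bal_weight B S \<ge> 0"
  using bal_weight_pos bal_weight_eq_0 by (metis less_eq_real_def)

lemma bal_weight_card_sum:
  fixes B :: "('n::finite) set set"
  assumes "minimal_balanced B"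
  shows "(\<Sum>S\<in>B. bal_weight B S * card S) = CARD('n)"
proof -
  have "(\<Sum>S\<in>B. bal_weight B S * card S) = (\<Sum>S\<in>B. \<Sum>i\<in>UNIV. if i \<in> S then bal_weight B S else 0)"
    by (intro sum.cong) (auto simp: sum.If_cases)
  also have "\<dots> = (\<Sum>i\<in>UNIV. \<Sum>S\<in>{S\<in>B. i \<in> S}. bal_weight B S)"
    by (subst sum.swap) (simp add: sum.inter_filter)
  also have "\<dots> = CARD('n)" using bal_weight_sum[OF assms] by simp
  finally show ?thesis .
qed

lemma minimal_balanced_UNIV: "minimal_balanced {UNIV :: ('n::finite) set}"
proof -
  have "{S\<in>{UNIV}. i \<in> S} = {UNIV}" for i :: 'n by auto
  then have "balanced {UNIV :: 'n set}" unfolding balanced_def by (intro conjI exI[of _ "\<lambda>_. 1"]) auto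
  moreover have "\<not> balanced B" if "B \<subset> {UNIV :: 'n set}" for B
    using that unfolding balanced_def by (auto simp: subset_singleton_iff)
  ultimately show ?thesis unfolding minimal_balanced_def by blast
qed

lemma minimal_balanced_proper:
  assumes "minimal_balanced B" "B \<noteq> {UNIV}" "S \<in> B"
  shows "S \<noteq> {}" "S \<noteq> UNIV"
proof -
  show "S \<noteq> {}" using minimal_balanced_balanced[OF assms(1)] assms(3) unfolding balanced_def by blast
  show "S \<noteq> UNIV"
  proof
    assume "S = UNIV"
    then have "{UNIV} \<subset> B" using assms by auto
    then show False using assms(1) minimal_balanced_UNIV unfolding minimal_balanced_def by blast
  qed
qed

lemma bal_weight_sum_diff_pos:
  assumes "minimal_balanced B" "minimal_balanced B'" "B' \<noteq> B"
  shows "(\<Sum>S\<in>B' - B. bal_weight B' S) > 0"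
proof -
  have "\<not> B' \<subset> B"
    using assms minimal_balanced_balanced unfolding minimal_balanced_def by blast
  then obtain S where "S \<in> B' - B" using assms(3) by blast
  then show ?thesis
    using assms(2) bal_weight_pos bal_weight_nonneg by (intro sum_pos2) auto
qed

section \<open>The inequality description of BG_+(n)\<close>

definition proper_coalitions :: "('n::finite) set set" where
  "proper_coalitions = {S. S \<noteq> {} \<and> S \<noteq> UNIV}"

definition nontrivial_minimal_balanced :: "('n::finite) set set set" where
  "nontrivial_minimal_balanced = {B. minimal_balanced B \<and> B \<noteq> {UNIV}}"

definition bg_index :: "('n::finite set + 'n set set) set" where
  "bg_index = Inl ` proper_coalitions \<union> Inr ` nontrivial_minimal_balanced"

definition bg_normal :: "('n::finite set + 'n set set) \<Rightarrow> real ^ 'n set" where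
  "bg_normal = case_sum (\<lambda>S. - axis S 1) (\<lambda>B. \<chi> S. bal_weight B S)"

definition bg_bound :: "('n::finite set + 'n set set) \<Rightarrow> real" where
  "bg_bound = case_sum (\<lambda>_. 0) (\<lambda>_. 1)"

definition normalized_games :: "(real ^ ('n::finite) set) set" where
  "normalized_games = {v. v $ {} = 0 \<and> v $ UNIV = 1}"

definition game_of :: "('n::finite set \<Rightarrow> real) \<Rightarrow> real ^ 'n set" where
  "game_of f = (\<chi> S. if S = {} then 0 else if S = UNIV then 1 else f S)"

definition share :: "('n::finite) set \<Rightarrow> real" where
  "share S = card S / (2 * CARD('n))"

definition bg_point :: "('n::finite set + 'n set set) \<Rightarrow> real ^ 'n set" where
  "bg_point = case_sum (\<lambda>S. game_of (share(S := 0)))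
     (\<lambda>B. game_of (\<lambda>S. 2 * share S - (if S \<in> B then 0 else 1) / (2 * CARD('n))))"

lemma nontrivial_minimal_balanced_proper:
  "B \<in> nontrivial_minimal_balanced \<Longrightarrow> S \<in> B \<Longrightarrow> S \<in> proper_coalitions"
  unfolding nontrivial_minimal_balanced_def proper_coalitions_def
  using minimal_balanced_proper by blast

lemma card_proper_coalition_pos: "S \<in> proper_coalitions \<Longrightarrow> card S > 0"
  unfolding proper_coalitions_def by (simp add: card_gt_0_iff)

lemma inner_bg_normal_Inl [simp]: "bg_normal (Inl S) \<bullet> v = - v $ S"
  unfolding bg_normal_def by (simp add: inner_axis')

lemma inner_bg_normal_Inr:
  assumes "minimal_balanced B"
  shows "bg_normal (Inr B) \<bullet> v = (\<Sum>S\<in>B. bal_weight B S * v $ S)"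
proof -
  have "bg_normal (Inr B) \<bullet> v = (\<Sum>S\<in>UNIV. bal_weight B S * v $ S)"
    unfolding bg_normal_def inner_vec_def by simp
  also have "\<dots> = (\<Sum>S\<in>B. bal_weight B S * v $ S)"
    using bal_weight_eq_0[OF assms] by (intro sum.mono_neutral_right) auto
  finally show ?thesis .
qed

lemma bg_constraints_iff:
  "(\<forall>i\<in>bg_index. bg_normal i \<bullet> v \<le> bg_bound i) \<longleftrightarrow>
     (\<forall>S\<in>proper_coalitions. v $ S \<ge> 0) \<and>
     (\<forall>B\<in>nontrivial_minimal_balanced. (\<Sum>S\<in>B. bal_weight B S * v $ S) \<le> 1)"
  unfolding bg_index_def ball_Un Ball_image_comp
  by (auto simp: bg_bound_def inner_bg_normal_Inr nontrivial_minimal_balanced_def)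

lemma BG_plus_eq:
  "BG_plus = normalized_games \<inter> {v. \<forall>i\<in>bg_index. bg_normal i \<bullet> v \<le> bg_bound i}"
  unfolding BG_plus_def normalized_games_def bg_constraints_iff proper_coalitions_def
    nontrivial_minimal_balanced_def
  by auto

lemma affine_normalized_games: "affine normalized_games"
  unfolding affine_def normalized_games_def by simp

lemma game_of_normalized [simp]: "game_of f \<in> normalized_games"
  unfolding game_of_def normalized_games_def by simp

lemma game_of_nth: "S \<in> proper_coalitions \<Longrightarrow> game_of f $ S = f S"
  unfolding game_of_def proper_coalitions_def by simp

lemma inner_bg_normal_Inr_game_of:
  assumes "B \<in> nontrivial_minimal_balanced"
  shows "bg_normal (Inr B) \<bullet> game_of f = (\<Sum>S\<in>B. bal_weight B S * f S)"
proof -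
  have "minimal_balanced B" using assms unfolding nontrivial_minimal_balanced_def by blast
  moreover have "game_of f $ S = f S" if "S \<in> B" for S
    using game_of_nth nontrivial_minimal_balanced_proper[OF assms that] by blast
  ultimately show ?thesis by (simp add: inner_bg_normal_Inr)
qed

lemma share_pos: "S \<in> proper_coalitions \<Longrightarrow> share S > 0"
  unfolding share_def using card_proper_coalition_pos
  by (simp add: zero_less_divide_iff finite_UNIV_card_ge_0)

lemma share_nonneg: "share S \<ge> 0"
  unfolding share_def by simp

lemma balanced_sum_share:
  fixes B :: "('n::finite) set set"
  assumes "B \<in> nontrivial_minimal_balanced"
  shows "(\<Sum>S\<in>B. bal_weight B S * share S) = 1 / 2"
proof -
  have "(\<Sum>S\<in>B. bal_weight B S * share S) = (\<Sum>S\<in>B. bal_weight B S * card S) / (2 * CARD('n))"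
    unfolding share_def by (simp add: sum_divide_distrib)
  also have "\<dots> = 1 / 2"
    using assms bal_weight_card_sum[of B] unfolding nontrivial_minimal_balanced_def by simp
  finally show ?thesis .
qed

lemma balanced_sum_collection_game:
  fixes B B' :: "('n::finite) set set"
  assumes "B' \<in> nontrivial_minimal_balanced"
  shows "(\<Sum>S\<in>B'. bal_weight B' S * (2 * share S - (if S \<in> B then 0 else 1) / (2 * CARD('n))))
    = 1 - (\<Sum>S\<in>B' - B. bal_weight B' S) / (2 * CARD('n))"
proof -
  have "(\<Sum>S\<in>B'. bal_weight B' S * (if S \<in> B then 0 else 1)) =
      (\<Sum>S\<in>B'. if S \<notin> B then bal_weight B' S else 0)"
    by (intro sum.cong) auto
  also have "\<dots> = (\<Sum>S\<in>B' - B. bal_weight B' S)"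
    by (simp add: sum.inter_filter[symmetric] set_diff_eq)
  finally have "(\<Sum>S\<in>B'. bal_weight B' S * (if S \<in> B then 0 else 1) / (2 * CARD('n))) =
      (\<Sum>S\<in>B' - B. bal_weight B' S) / (2 * CARD('n))"
    by (simp add: sum_divide_distrib[symmetric])
  moreover have "(\<Sum>S\<in>B'. bal_weight B' S * (2 * share S)) = 1"
  proof -
    have "(\<Sum>S\<in>B'. bal_weight B' S * (2 * share S)) = 2 * (\<Sum>S\<in>B'. bal_weight B' S * share S)"
      by (simp add: sum_distrib_left algebra_simps)
    then show ?thesis using balanced_sum_share[OF assms] by simp
  qed
  ultimately show ?thesis by (simp add: right_diff_distrib sum_subtractf)
qed

lemma bg_index_cases:
  assumes "j \<in> bg_index"
  obtains (coalition) T where "T \<in> proper_coalitions" "j = Inl T"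
    | (collection) B where "B \<in> nontrivial_minimal_balanced" "j = Inr B"
  using assms unfolding bg_index_def by blast

lemma game_of_share_strict:
  assumes "j \<in> bg_index"
  shows "bg_normal j \<bullet> game_of share < bg_bound j"
  using assms
proof (cases rule: bg_index_cases)
  case (coalition T)
  then show ?thesis using share_pos by (simp add: game_of_nth inner_bg_normal_Inr_game_of bg_bound_def)
next
  case (collection B)
  then show ?thesis by (simp add: game_of_nth inner_bg_normal_Inr_game_of bg_bound_def balanced_sum_share)
qed

lemma bg_point_Inl_strict:
  assumes S: "S \<in> proper_coalitions" and j: "j \<in> bg_index - {Inl S}"
  shows "bg_normal j \<bullet> bg_point (Inl S) < bg_bound j"
proof -
  from j have "j \<in> bg_index" by blast
  then show ?thesis
  proof (cases rule: bg_index_cases)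
    case (coalition T)
    then show ?thesis using j share_pos by (simp add: bg_point_def game_of_nth bg_bound_def)
  next
    case (collection B)
    then have "minimal_balanced B" unfolding nontrivial_minimal_balanced_def by blast
    have "(\<Sum>T\<in>B. bal_weight B T * (share(S := 0)) T) \<le> (\<Sum>T\<in>B. bal_weight B T * share T)"
      using bal_weight_nonneg[OF \<open>minimal_balanced B\<close>] share_nonneg
      by (intro sum_mono mult_left_mono) auto
    then show ?thesis
      using collection
      by (simp add: bg_point_def inner_bg_normal_Inr_game_of bg_bound_def balanced_sum_share)
  qed
qed

lemma bg_point_Inr_strict:
  fixes B :: "('n::finite) set set"
  assumes B: "B \<in> nontrivial_minimal_balanced" and j: "j \<in> bg_index - {Inr B}"
  shows "bg_normal j \<bullet> bg_point (Inr B) < bg_bound j"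
proof -
  from j have "j \<in> bg_index" by blast
  then show ?thesis
  proof (cases rule: bg_index_cases)
    case (coalition T)
    have "0 < real CARD('n)" by (simp add: finite_UNIV_card_ge_0)
    then have "1 / (2 * CARD('n)) < 1 / CARD('n)" by (simp add: field_simps)
    also have "\<dots> \<le> 2 * share T"
      using card_proper_coalition_pos[OF coalition(1)] unfolding share_def
      by (simp add: divide_right_mono)
    finally show ?thesis
      using coalition share_pos by (auto simp: bg_point_def game_of_nth bg_bound_def)
  next
    case (collection B')
    then have "(\<Sum>S\<in>B' - B. bal_weight B' S) > 0"
      using B j bal_weight_sum_diff_pos unfolding nontrivial_minimal_balanced_def by blast
    then show ?thesis
      unfolding bg_point_def collection(2) sum.case inner_bg_normal_Inr_game_of[OF collection(1)]
        balanced_sum_collection_game[OF collection(1)]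
      by (simp add: bg_bound_def finite_UNIV_card_ge_0)
  qed
qed

lemma bg_point_normalized: "bg_point i \<in> normalized_games"
  by (cases i) (simp_all add: bg_point_def)

lemma bg_point_on_hyperplane:
  assumes "i \<in> bg_index"
  shows "bg_normal i \<bullet> bg_point i = bg_bound i"
  using assms
proof (cases rule: bg_index_cases)
  case (coalition T)
  then show ?thesis by (simp add: bg_point_def game_of_nth bg_bound_def)
next
  case (collection B)
  then show ?thesis
    unfolding collection(2) bg_point_def sum.case inner_bg_normal_Inr_game_of[OF collection(1)]
      balanced_sum_collection_game[OF collection(1)]
    by (simp add: bg_bound_def)
qed

lemma bg_point_strict:
  assumes "i \<in> bg_index" "j \<in> bg_index - {i}"
  shows "bg_normal j \<bullet> bg_point i < bg_bound j"
  using assms(1)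
proof (cases rule: bg_index_cases)
  case (coalition T)
  then show ?thesis using bg_point_Inl_strict assms(2) by blast
next
  case (collection B)
  then show ?thesis using bg_point_Inr_strict assms(2) by blast
qed

lemma BG_plus_facets:
  shows "{F. F facet_of BG_plus} =
      (\<lambda>i. BG_plus \<inter> {v. bg_normal i \<bullet> v = bg_bound i}) ` (bg_index :: ('n::finite set + _) set)"
    and "inj_on (\<lambda>i. BG_plus \<inter> {v. bg_normal i \<bullet> v = bg_bound i}) (bg_index :: ('n set + _) set)"
proof -
  have "bg_point i \<in> normalized_games \<and> bg_normal i \<bullet> bg_point i = bg_bound i \<and>
      (\<forall>j\<in>bg_index - {i}. bg_normal j \<bullet> bg_point i < bg_bound j)" if "i \<in> bg_index" for i
    using that bg_point_normalized bg_point_on_hyperplane bg_point_strict by blast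
  note facets = facets_of_irredundant_inequalities[OF _ affine_normalized_games BG_plus_eq
      game_of_normalized game_of_share_strict this]
  show "{F. F facet_of BG_plus} =
      (\<lambda>i. BG_plus \<inter> {v. bg_normal i \<bullet> v = bg_bound i}) ` (bg_index :: ('n set + _) set)"
    by (rule facets(1)) simp
  show "inj_on (\<lambda>i. BG_plus \<inter> {v. bg_normal i \<bullet> v = bg_bound i}) (bg_index :: ('n set + _) set)"
    by (rule facets(2)) simp
qed

lemma card_proper_coalitions: "card (proper_coalitions :: ('n::finite) set set) = 2 ^ CARD('n) - 2"
proof -
  have eq: "proper_coalitions = UNIV - {{}, UNIV :: 'n set}" unfolding proper_coalitions_def by auto
  have "card (proper_coalitions :: 'n set set) = card (UNIV :: 'n set set) - card {{}, UNIV :: 'n set}"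
    unfolding eq by (rule card_Diff_subset) auto
  then show ?thesis by (simp add: card_UNIV_set)
qed

lemma card_nontrivial_minimal_balanced:
  "card (nontrivial_minimal_balanced :: ('n::finite) set set set) = num_min_bal TYPE('n) - 1"
proof -
  have eq: "nontrivial_minimal_balanced = {B :: 'n set set. minimal_balanced B} - {{UNIV}}"
    unfolding nontrivial_minimal_balanced_def by auto
  show ?thesis
    unfolding eq num_min_bal_def by (rule card_Diff_singleton) (simp add: minimal_balanced_UNIV)
qed

lemma card_bg_index: "card (bg_index :: ('n::finite set + _) set) = 2 ^ CARD('n) + num_min_bal TYPE('n) - 3"
proof -
  have "card (bg_index :: ('n set + _) set) =
      card (proper_coalitions :: 'n set set) + card (nontrivial_minimal_balanced :: 'n set set set)"
    unfolding bg_index_def by (subst card_Un_disjoint) (auto simp: card_image)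
  moreover have "num_min_bal TYPE('n) \<ge> 1"
    unfolding num_min_bal_def using minimal_balanced_UNIV[where 'n='n]
    by (auto simp: Suc_le_eq card_gt_0_iff)
  moreover have "(2::nat) ^ CARD('n) \<ge> 2"
    using finite_UNIV_card_ge_0[where 'a='n] by (simp add: self_le_power)
  ultimately show ?thesis by (simp add: card_proper_coalitions card_nontrivial_minimal_balanced)
qed

theorem theorem16:
  assumes "CARD('n::finite) \<ge> 2"
  shows "(\<forall>S::'n set. S \<noteq> {} \<and> S \<noteq> UNIV \<longrightarrow>
            (BG_plus \<inter> {v. v $ S = 0}) facet_of (BG_plus :: (real ^ 'n set) set))
       \<and> (\<forall>B::'n set set. minimal_balanced B \<and> B \<noteq> {UNIV} \<longrightarrow>
            (BG_plus \<inter> {v. (\<Sum>S\<in>B. bal_weight B S * v $ S) = 1})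
               facet_of (BG_plus :: (real ^ 'n set) set))
       \<and> card {F. F facet_of (BG_plus :: (real ^ 'n set) set)}
            = 2 ^ CARD('n) + num_min_bal TYPE('n) - 3"
proof -
  let ?facet = "\<lambda>i. BG_plus \<inter> {v. bg_normal i \<bullet> v = bg_bound i}"
  have facet: "?facet i facet_of (BG_plus :: (real ^ 'n set) set)" if "i \<in> bg_index" for i
    using BG_plus_facets(1) that by blast
  have "BG_plus \<inter> {v. v $ S = 0} facet_of BG_plus" if "S \<noteq> {} \<and> S \<noteq> UNIV" for S :: "'n set"
    using facet[of "Inl S"] that by (simp add: bg_index_def proper_coalitions_def bg_bound_def)
  moreover have "BG_plus \<inter> {v. (\<Sum>S\<in>B. bal_weight B S * v $ S) = 1} facet_of BG_plus"
    if "minimal_balanced B \<and> B \<noteq> {UNIV}" for B :: "'n set set"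
    using facet[of "Inr B"] that
    by (simp add: bg_index_def nontrivial_minimal_balanced_def bg_bound_def inner_bg_normal_Inr)
  moreover have "card {F. F facet_of (BG_plus :: (real ^ 'n set) set)} = card (bg_index :: ('n set + _) set)"
    unfolding BG_plus_facets(1) using BG_plus_facets(2) by (rule card_image)
  ultimately show ?thesis using card_bg_index by auto
qed

end
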